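(* Let $N\ge 1$ and $n\ge 2N+2$ be integers, let $x\in\{0,1\}^N$ and $k^\star\in[N]$. Let $G$ be the graph on vertex set $P\cup U\cup W$ with $P=\{v_1,\dots,v_{n-2N}\}$, $U=\{u_1,\dots,u_N\}$, $W=\{w_1,\dots,w_N\}$ (so $n$ vertices), whose edges are: $v_iv_{i+1}$ for $1\le i<n-2N$; $u_iw_i$ for all $i\in[N]$; $v_1u_i$ for every $i$ with $x_i=1$; $v_1w_i$ for every $i\neq k^\star$; and $w_{k^\star}v_{n-2N}$. If $x_{k^\star}=1$ then the graphic TSP cost of $G$ is at most $n+2N$; if $x_{k^\star}=0$ then the graphic TSP cost of $G$ is at least $2n-N-1$.
   Context: For a connected unweighted undirected graph $G=(V,E)$ with $n\ge 2$ vertices, the graphic TSP cost is $\min \sum_{i=1}^{n} d_G(v_i,v_{i+1})$ over cyclic orderings $(v_1,\dots,v_n)$ of $V$ ($v_{n+1}=v_1$), where $d_G$ is shortest-path distance. *)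

theory Defs
  imports Main
begin

text \<open>An undirected graph is given by a vertex set V and a symmetric edge
predicate E.\<close>

definition walk :: "'a set \<Rightarrow> ('a \<Rightarrow> 'a \<Rightarrow> bool) \<Rightarrow> 'a list \<Rightarrow> bool" where
  "walk V E p \<longleftrightarrow> p \<noteq> [] \<and> set p \<subseteq> V \<and>
     (\<forall>i. Suc i < length p \<longrightarrow> E (p ! i) (p ! Suc i))"

definition gdist :: "'a set \<Rightarrow> ('a \<Rightarrow> 'a \<Rightarrow> bool) \<Rightarrow> 'a \<Rightarrow> 'a \<Rightarrow> nat" where
  "gdist V E a b = (LEAST k. \<exists>p. walk V E p \<and> hd p = a \<and> last p = b \<and> length p = Suc k)"

definition tour_cost :: "'a set \<Rightarrow> ('a \<Rightarrow> 'a \<Rightarrow> bool) \<Rightarrow> 'a list \<Rightarrow> nat" where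
  "tour_cost V E vs = (\<Sum>i<length vs. gdist V E (vs ! i) (vs ! ((Suc i) mod length vs)))"

definition graphic_tsp :: "'a set \<Rightarrow> ('a \<Rightarrow> 'a \<Rightarrow> bool) \<Rightarrow> nat" where
  "graphic_tsp V E = Min {tour_cost V E vs | vs. distinct vs \<and> set vs = V}"

datatype vtx = Pv nat | Uv nat | Wv nat

definition constr_V :: "nat \<Rightarrow> nat \<Rightarrow> vtx set" where
  "constr_V N n = {Pv i | i. 1 \<le> i \<and> i \<le> n - 2 * N}
                \<union> {Uv i | i. 1 \<le> i \<and> i \<le> N} \<union> {Wv i | i. 1 \<le> i \<and> i \<le> N}"

text \<open>x i = 1 encodes x_i = 1; k is k*.\<close>

definition constr_E0 :: "nat \<Rightarrow> nat \<Rightarrow> (nat \<Rightarrow> nat) \<Rightarrow> nat \<Rightarrow> vtx \<Rightarrow> vtx \<Rightarrow> bool" where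
  "constr_E0 N n x k a b \<longleftrightarrow>
     (\<exists>i. 1 \<le> i \<and> i < n - 2 * N \<and> a = Pv i \<and> b = Pv (Suc i))
   \<or> (\<exists>i. 1 \<le> i \<and> i \<le> N \<and> a = Uv i \<and> b = Wv i)
   \<or> (\<exists>i. 1 \<le> i \<and> i \<le> N \<and> x i = 1 \<and> a = Pv 1 \<and> b = Uv i)
   \<or> (\<exists>i. 1 \<le> i \<and> i \<le> N \<and> i \<noteq> k \<and> a = Pv 1 \<and> b = Wv i)
   \<or> (a = Wv k \<and> b = Pv (n - 2 * N))"

definition constr_E :: "nat \<Rightarrow> nat \<Rightarrow> (nat \<Rightarrow> nat) \<Rightarrow> nat \<Rightarrow> vtx \<Rightarrow> vtx \<Rightarrow> bool" where
  "constr_E N n x k a b \<longleftrightarrow> constr_E0 N n x k a b \<or> constr_E0 N n x k b a"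

end

theory Submission
  imports Defs
begin

text \<open>Write m = n - 2N for the number of vertices of the path P. If x_k* = 1, the tour
v_1, ..., v_m, w_k*, u_k*, followed by the pairs w_i, u_i (i \<noteq> k*), costs at most
(m + 1) + 4(N - 1) + 3 = n + 2N, since each u_j reaches v_1 within two steps.

If x_k* = 0, then u_k* is a pendant vertex at w_k*, whose only other neighbour is v_m, so
the pair u_k*, w_k* sits "behind" the whole path. The lower bound is a cut-packing
argument: take the prefix cuts of the path (with u_k*, w_k* placed at its end and every
other u_i, w_i at v_1) and the cuts {u_k*, w_k*}, {u_k*} with weight 2, and the cuts
{u_i}, {w_i}, {u_i, w_i} (i \<noteq> k*) with weight 1. Every edge crosses cuts of total weight at
most 2, so the weighted crossing number of any pair of vertices is at most twice their
distance, while a tour crosses every cut at least twice. Hence twice the tour cost is at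
least 2(2(m - 1) + 2 + 2 + 3(N - 1)), i.e. the cost is at least 2n - N - 1.\<close>

section \<open>Walks and shortest-path distance\<close>

lemma walk_Nil [simp]: "\<not> walk V E []"
  by (simp add: walk_def)

lemma walk_singleton [simp]: "walk V E [a] \<longleftrightarrow> a \<in> V"
  by (simp add: walk_def)

lemma walk_Cons_Cons [simp]: "walk V E (a # b # p) \<longleftrightarrow> a \<in> V \<and> E a b \<and> walk V E (b # p)"
  unfolding walk_def by (auto simp: nth_Cons split: nat.splits)

lemma walk_Cons_in: "walk V E (a # p) \<Longrightarrow> a \<in> V"
  by (simp add: walk_def)

lemma walk_append_tl:
  assumes "walk V E p" "walk V E q" "last p = hd q"
  shows "walk V E (p @ tl q)"
  using assms
proof (induction p rule: induct_list012)
  case (2 a)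
  then show ?case by (cases q) auto
qed auto

lemma walk_rev:
  assumes sym: "\<And>a b. E a b \<Longrightarrow> E b a" and "walk V E p"
  shows "walk V E (rev p)"
  using assms(2)
proof (induction p rule: induct_list012)
  case (3 a b p)
  then have "walk V E (rev (b # p))" "walk V E [b, a]"
    using sym walk_Cons_in[of V E b p] by auto
  from walk_append_tl[OF this] show ?case by simp
qed auto

definition reachable :: "'a set \<Rightarrow> ('a \<Rightarrow> 'a \<Rightarrow> bool) \<Rightarrow> 'a \<Rightarrow> 'a \<Rightarrow> bool" where
  "reachable V E a b \<longleftrightarrow> (\<exists>p. walk V E p \<and> hd p = a \<and> last p = b)"

lemma reachable_edge: "a \<in> V \<Longrightarrow> b \<in> V \<Longrightarrow> E a b \<Longrightarrow> reachable V E a b"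
  unfolding reachable_def by (intro exI[of _ "[a, b]"]) simp

lemma reachable_sym:
  "(\<And>a b. E a b \<Longrightarrow> E b a) \<Longrightarrow> reachable V E a b \<Longrightarrow> reachable V E b a"
  unfolding reachable_def by (metis walk_rev walk_Nil hd_rev last_rev)

lemma reachable_trans:
  assumes "reachable V E a b" "reachable V E b c"
  shows "reachable V E a c"
proof -
  obtain p q where p: "walk V E p" "hd p = a" "last p = b"
    and q: "walk V E q" "hd q = b" "last q = c"
    using assms unfolding reachable_def by blast
  moreover have "walk V E (p @ tl q)"
    using walk_append_tl[OF p(1) q(1)] p(3) q(2) by simp
  moreover have "p \<noteq> []" "q \<noteq> []"
    using p(1) q(1) by auto
  ultimately show ?thesis
    unfolding reachable_def by (intro exI[of _ "p @ tl q"]) (cases q, auto)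
qed

lemma gdist_le_walk:
  "walk V E p \<Longrightarrow> hd p = a \<Longrightarrow> last p = b \<Longrightarrow> gdist V E a b \<le> length p - 1"
  unfolding gdist_def by (rule Least_le) (cases p, auto)

lemma gdist_edge: "a \<in> V \<Longrightarrow> b \<in> V \<Longrightarrow> E a b \<Longrightarrow> gdist V E a b \<le> 1"
  using gdist_le_walk[of V E "[a, b]"] by simp

lemma gdist_attained:
  assumes "reachable V E a b"
  shows "\<exists>p. walk V E p \<and> hd p = a \<and> last p = b \<and> length p = Suc (gdist V E a b)"
proof -
  obtain p where "walk V E p" "hd p = a" "last p = b"
    using assms unfolding reachable_def by blast
  then have "\<exists>k p. walk V E p \<and> hd p = a \<and> last p = b \<and> length p = Suc k"
    by (intro exI[of _ "length p - 1"] exI[of _ p]) (cases p, auto)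
  then show ?thesis
    unfolding gdist_def by (rule LeastI_ex)
qed

lemma gdist_triangle:
  assumes "reachable V E a b" "reachable V E b c"
  shows "gdist V E a c \<le> gdist V E a b + gdist V E b c"
proof -
  obtain p where p: "walk V E p" "hd p = a" "last p = b" "length p = Suc (gdist V E a b)"
    using gdist_attained[OF assms(1)] by blast
  obtain q where q: "walk V E q" "hd q = b" "last q = c" "length q = Suc (gdist V E b c)"
    using gdist_attained[OF assms(2)] by blast
  have "walk V E (p @ tl q)"
    using walk_append_tl[OF p(1) q(1)] p(3) q(2) by simp
  moreover have "hd (p @ tl q) = a" "last (p @ tl q) = c"
    using p q by (cases p; cases q; auto)+
  ultimately have "gdist V E a c \<le> length (p @ tl q) - 1"
    by (rule gdist_le_walk)
  then show ?thesis
    using p(4) q(4) by simp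
qed

text \<open>Weak duality for the cut-packing bound.\<close>

lemma walk_potential_le:
  assumes tri: "\<And>a b c. h a c \<le> h a b + h b c" and refl: "\<And>a. h a a = 0"
    and edge: "\<And>a b. E a b \<Longrightarrow> h a b \<le> c"
    and "walk V E p"
  shows "h (hd p) (last p) \<le> c * (length p - 1)"
  using \<open>walk V E p\<close>
proof (induction p rule: induct_list012)
  case (3 a b p)
  then have "h b (last (b # p)) \<le> c * (length (b # p) - 1)" "h a b \<le> c"
    using edge by auto
  then show ?case
    using tri[of a "last (b # p)" b] by (simp add: algebra_simps split: if_splits)
qed (simp_all add: refl)

lemma gdist_potential_le:
  assumes "\<And>a b c. h a c \<le> h a b + h b c" "\<And>a. h a a = 0" "\<And>a b. E a b \<Longrightarrow> h a b \<le> c"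
    and "reachable V E a b"
  shows "h a b \<le> c * gdist V E a b"
proof -
  obtain p where "walk V E p" "hd p = a" "last p = b" "length p = Suc (gdist V E a b)"
    using gdist_attained[OF assms(4)] by blast
  then show ?thesis
    using walk_potential_le[OF assms(1-3)] by fastforce
qed

fun path_cost :: "('a \<Rightarrow> 'a \<Rightarrow> nat) \<Rightarrow> 'a list \<Rightarrow> nat" where
  "path_cost d [] = 0"
| "path_cost d [a] = 0"
| "path_cost d (a # b # r) = d a b + path_cost d (b # r)"

lemma path_cost_append: "path_cost d (xs @ y # ys) = path_cost d (xs @ [y]) + path_cost d (y # ys)"
  by (induction xs rule: induct_list012) auto

lemma path_cost_conv_sum: "path_cost d xs = (\<Sum>i<length xs - 1. d (xs ! i) (xs ! Suc i))"
proof (induction xs rule: induct_list012)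
  case (3 a b r)
  then show ?case
    by (simp add: sum.lessThan_Suc_shift del: sum.lessThan_Suc)
qed auto

lemma path_cost_le:
  "(\<And>i. Suc i < length xs \<Longrightarrow> d (xs ! i) (xs ! Suc i) \<le> c) \<Longrightarrow> path_cost d xs \<le> c * (length xs - 1)"
  unfolding path_cost_conv_sum
  by (rule order.trans[OF sum_mono[of _ _ "\<lambda>_. c"]]) auto

lemma tour_cost_conv_path_cost:
  assumes "vs \<noteq> []"
  shows "tour_cost V E vs = path_cost (gdist V E) (vs @ [hd vs])"
  unfolding path_cost_conv_sum tour_cost_def length_append_singleton diff_Suc_1
proof (rule sum.cong[OF refl])
  fix i assume "i \<in> {..<length vs}"
  with assms show "gdist V E (vs ! i) (vs ! (Suc i mod length vs))
      = gdist V E ((vs @ [hd vs]) ! i) ((vs @ [hd vs]) ! Suc i)"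
    by (cases "Suc i = length vs") (auto simp: nth_append hd_conv_nth)
qed

lemma tour_potential_le:
  assumes "\<And>a b c. h a c \<le> h a b + h b c" "\<And>a. h a a = 0" "\<And>a b. E a b \<Longrightarrow> h a b \<le> c"
    and connected: "\<And>a b. a \<in> V \<Longrightarrow> b \<in> V \<Longrightarrow> reachable V E a b"
    and "set vs \<subseteq> V"
  shows "(\<Sum>i<length vs. h (vs ! i) (vs ! (Suc i mod length vs))) \<le> c * tour_cost V E vs"
  unfolding tour_cost_def sum_distrib_left
proof (rule sum_mono)
  fix i assume "i \<in> {..<length vs}"
  then have "i < length vs" "Suc i mod length vs < length vs"
    by (auto intro: mod_less_divisor)
  then have "vs ! i \<in> V" "vs ! (Suc i mod length vs) \<in> V"
    using \<open>set vs \<subseteq> V\<close> nth_mem by blast+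
  then show "h (vs ! i) (vs ! (Suc i mod length vs)) \<le> c * gdist V E (vs ! i) (vs ! (Suc i mod length vs))"
    by (intro gdist_potential_le[OF assms(1-3)] connected)
qed

lemma finite_tour_costs:
  assumes "finite V"
  shows "finite {tour_cost V E vs | vs. distinct vs \<and> set vs = V}"
proof (rule finite_subset)
  show "{tour_cost V E vs | vs. distinct vs \<and> set vs = V}
      \<subseteq> tour_cost V E ` {xs. set xs \<subseteq> V \<and> distinct xs}"
    by auto
qed (use finite_subset_distinct[OF assms] in blast)

lemma graphic_tsp_le_tour_cost:
  "finite V \<Longrightarrow> distinct vs \<Longrightarrow> set vs = V \<Longrightarrow> graphic_tsp V E \<le> tour_cost V E vs"
  unfolding graphic_tsp_def by (rule Min_le) (auto simp: finite_tour_costs)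

lemma graphic_tsp_ge:
  assumes "finite V" "\<And>vs. distinct vs \<Longrightarrow> set vs = V \<Longrightarrow> c \<le> tour_cost V E vs"
  shows "c \<le> graphic_tsp V E"
proof -
  obtain vs where "distinct vs" "set vs = V"
    using finite_distinct_list[OF assms(1)] by blast
  then show ?thesis
    unfolding graphic_tsp_def using assms by (subst Min_ge_iff) (auto simp: finite_tour_costs)
qed

section \<open>Cuts crossed by a tour\<close>

definition crossing :: "'a set \<Rightarrow> 'a \<Rightarrow> 'a \<Rightarrow> nat" where
  "crossing C a b = (if (a \<in> C) = (b \<in> C) then 0 else 1)"

lemma crossing_refl [simp]: "crossing C a a = 0"
  by (simp add: crossing_def)

lemma crossing_sym: "crossing C a b = crossing C b a"
  by (simp add: crossing_def)

lemma crossing_triangle: "crossing C a c \<le> crossing C a b + crossing C b c"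
  by (simp add: crossing_def)

lemma sum_crossing_triangle:
  "(\<Sum>j\<in>J. crossing (C j) a c) \<le> (\<Sum>j\<in>J. crossing (C j) a b) + (\<Sum>j\<in>J. crossing (C j) b c)"
  unfolding sum.distrib[symmetric] by (rule sum_mono) (rule crossing_triangle)

lemma cyclic_exit_index:
  assumes "ia < length vs" "vs ! ia \<in> C" "ib < length vs" "vs ! ib \<notin> C"
  shows "\<exists>i<length vs. vs ! i \<in> C \<and> vs ! (Suc i mod length vs) \<notin> C"
proof (rule ccontr)
  let ?L = "length vs"
  assume "\<not> ?thesis"
  then have step: "\<And>i. i < ?L \<Longrightarrow> vs ! i \<in> C \<Longrightarrow> vs ! (Suc i mod ?L) \<in> C" by blast
  have "vs ! ((ia + t) mod ?L) \<in> C" for t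
  proof (induction t)
    case (Suc t)
    have "0 < ?L" using assms(1) by linarith
    then show ?case
      using step[OF mod_less_divisor Suc] by (simp add: mod_Suc_eq)
  qed (use assms in simp)
  then have "vs ! ((ia + (?L - ia + ib)) mod ?L) \<in> C" .
  moreover have "(ia + (?L - ia + ib)) mod ?L = ib" using assms by simp
  ultimately show False using assms(4) by simp
qed

lemma tour_crossing_ge_2:
  assumes "a \<in> set vs" "a \<in> C" "b \<in> set vs" "b \<notin> C"
  shows "2 \<le> (\<Sum>i<length vs. crossing C (vs ! i) (vs ! (Suc i mod length vs)))"
proof -
  let ?L = "length vs"
  obtain ia ib where ia: "ia < ?L" "vs ! ia = a" and ib: "ib < ?L" "vs ! ib = b"
    using assms(1,3) by (meson in_set_conv_nth)
  obtain i1 where i1: "i1 < ?L" "vs ! i1 \<in> C" "vs ! (Suc i1 mod ?L) \<notin> C"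
    using cyclic_exit_index[of ia vs C ib] ia ib assms(2,4) by blast
  obtain i2 where i2: "i2 < ?L" "vs ! i2 \<notin> C" "vs ! (Suc i2 mod ?L) \<in> C"
    using cyclic_exit_index[of ib vs "- C" ia] ia ib assms(2,4) by auto
  have "i1 \<noteq> i2" using i1 i2 by blast
  then have "2 = (\<Sum>i\<in>{i1, i2}. crossing C (vs ! i) (vs ! (Suc i mod ?L)))"
    using i1 i2 by (simp add: crossing_def)
  also have "\<dots> \<le> (\<Sum>i<?L. crossing C (vs ! i) (vs ! (Suc i mod ?L)))"
    using i1 i2 by (intro sum_mono2) auto
  finally show ?thesis .
qed

lemma tour_crossing_family_ge:
  assumes "\<And>j. j \<in> J \<Longrightarrow> \<exists>a\<in>set vs. \<exists>b\<in>set vs. a \<in> C j \<and> b \<notin> C j"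
  shows "2 * card J \<le> (\<Sum>i<length vs. \<Sum>j\<in>J. crossing (C j) (vs ! i) (vs ! (Suc i mod length vs)))"
proof -
  have "2 * card J = (\<Sum>j\<in>J. 2::nat)" by simp
  also have "\<dots> \<le> (\<Sum>j\<in>J. \<Sum>i<length vs. crossing (C j) (vs ! i) (vs ! (Suc i mod length vs)))"
  proof (rule sum_mono)
    fix j assume "j \<in> J"
    then obtain a b where "a \<in> set vs" "a \<in> C j" "b \<in> set vs" "b \<notin> C j"
      using assms by blast
    then show "2 \<le> (\<Sum>i<length vs. crossing (C j) (vs ! i) (vs ! (Suc i mod length vs)))"
      by (rule tour_crossing_ge_2)
  qed
  also have "\<dots> = (\<Sum>i<length vs. \<Sum>j\<in>J. crossing (C j) (vs ! i) (vs ! (Suc i mod length vs)))"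
    by (rule sum.swap)
  finally show ?thesis .
qed

lemma constr_V_iff [simp]:
  "Pv i \<in> constr_V N n \<longleftrightarrow> 1 \<le> i \<and> i \<le> n - 2 * N"
  "Uv i \<in> constr_V N n \<longleftrightarrow> 1 \<le> i \<and> i \<le> N"
  "Wv i \<in> constr_V N n \<longleftrightarrow> 1 \<le> i \<and> i \<le> N"
  by (auto simp: constr_V_def)

lemma finite_constr_V: "finite (constr_V N n)"
proof -
  have "constr_V N n \<subseteq> Pv ` {1..n - 2 * N} \<union> Uv ` {1..N} \<union> Wv ` {1..N}"
    by (auto simp: constr_V_def)
  then show ?thesis by (rule finite_subset) auto
qed

lemma constr_E_sym: "constr_E N n x k a b \<Longrightarrow> constr_E N n x k b a"
  by (auto simp: constr_E_def)

text \<open>The prefix cuts {v. path_position m k v \<le> j} of the lower bound place u_k*, w_k* at the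
far end v_m of the path and all other u_i, w_i at v_1.\<close>

definition path_position :: "nat \<Rightarrow> nat \<Rightarrow> vtx \<Rightarrow> nat" where
  "path_position m k v =
     (case v of Pv i \<Rightarrow> i | Uv i \<Rightarrow> if i = k then m else 1 | Wv i \<Rightarrow> if i = k then m else 1)"

definition cut_potential :: "nat \<Rightarrow> nat \<Rightarrow> nat \<Rightarrow> vtx \<Rightarrow> vtx \<Rightarrow> nat" where
  "cut_potential m N k a b =
     2 * (\<Sum>j\<in>{1..<m}. crossing {v. path_position m k v \<le> j} a b)
     + 2 * crossing {Uv k, Wv k} a b + 2 * crossing {Uv k} a b
     + (\<Sum>i\<in>{1..N} - {k}. crossing {Uv i} a b) + (\<Sum>i\<in>{1..N} - {k}. crossing {Wv i} a b)
     + (\<Sum>i\<in>{1..N} - {k}. crossing {Uv i, Wv i} a b)"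

lemma cut_potential_refl [simp]: "cut_potential m N k a a = 0"
  by (simp add: cut_potential_def)

lemma cut_potential_sym: "cut_potential m N k a b = cut_potential m N k b a"
  by (simp add: cut_potential_def crossing_sym)

lemma cut_potential_triangle:
  "cut_potential m N k a c \<le> cut_potential m N k a b + cut_potential m N k b c"
  using sum_crossing_triangle[where J="{1..<m}" and C="\<lambda>j. {v. path_position m k v \<le> j}" and a=a and b=b and c=c]
    sum_crossing_triangle[where J="{1..N} - {k}" and C="\<lambda>i. {Uv i}" and a=a and b=b and c=c]
    sum_crossing_triangle[where J="{1..N} - {k}" and C="\<lambda>i. {Wv i}" and a=a and b=b and c=c]
    sum_crossing_triangle[where J="{1..N} - {k}" and C="\<lambda>i. {Uv i, Wv i}" and a=a and b=b and c=c]
    crossing_triangle[of "{Uv k, Wv k}" a c b] crossing_triangle[of "{Uv k}" a c b]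
  unfolding cut_potential_def by linarith

lemma prefix_cuts_crossed_by_path_edge:
  assumes "1 \<le> i" "i < m"
  shows "(\<Sum>j\<in>{1..<m}. crossing {v. path_position m k v \<le> j} (Pv i) (Pv (Suc i))) = 1"
proof -
  have "(\<Sum>j\<in>{1..<m}. crossing {v. path_position m k v \<le> j} (Pv i) (Pv (Suc i)))
      = (\<Sum>j\<in>{1..<m}. if j = i then 1 else 0)"
    by (rule sum.cong) (auto simp: crossing_def path_position_def)
  also have "\<dots> = 1"
    using assms by simp
  finally show ?thesis .
qed

context
  fixes N n k :: nat and x :: "nat \<Rightarrow> nat"
  assumes k: "k \<in> {1..N}" and path_nonempty: "2 * N < n"
begin

private abbreviation "V \<equiv> constr_V N n"
private abbreviation "E \<equiv> constr_E N n x k"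
private abbreviation "m \<equiv> n - 2 * N"

lemma E_path: "1 \<le> i \<Longrightarrow> i < m \<Longrightarrow> E (Pv i) (Pv (Suc i))"
  by (simp add: constr_E_def constr_E0_def)

lemma E_W_U: "i \<in> {1..N} \<Longrightarrow> E (Wv i) (Uv i)"
  by (auto simp: constr_E_def constr_E0_def)

lemma E_U_P1: "i \<in> {1..N} \<Longrightarrow> x i = 1 \<Longrightarrow> E (Uv i) (Pv 1)"
  by (auto simp: constr_E_def constr_E0_def)

lemma E_P1_W: "i \<in> {1..N} - {k} \<Longrightarrow> E (Pv 1) (Wv i)"
  by (auto simp: constr_E_def constr_E0_def)

lemma E_end_W: "E (Pv m) (Wv k)"
  by (simp add: constr_E_def constr_E0_def)

lemma walk_path: "1 \<le> j \<Longrightarrow> j \<le> m \<Longrightarrow> walk V E (map Pv [1..<Suc j])"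
  unfolding walk_def by (auto simp: nth_upt E_path simp del: upt_Suc)

lemma reachable_from_P1:
  assumes "a \<in> V"
  shows "reachable V E (Pv 1) a"
proof -
  have path: "reachable V E (Pv 1) (Pv j)" if "1 \<le> j" "j \<le> m" for j
    unfolding reachable_def using walk_path[OF that] that
    by (intro exI[of _ "map Pv [1..<Suc j]"]) (simp add: hd_map last_map hd_upt last_upt del: upt_Suc)
  have W: "reachable V E (Pv 1) (Wv i)" if "i \<in> {1..N}" for i
  proof (cases "i = k")
    case True
    have "reachable V E (Pv 1) (Pv m)"
      using path_nonempty by (intro path) auto
    moreover have "reachable V E (Pv m) (Wv k)"
      using k path_nonempty by (intro reachable_edge E_end_W) auto
    ultimately have "reachable V E (Pv 1) (Wv k)"
      by (rule reachable_trans)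
    with True show ?thesis by simp
  next
    case False
    then show ?thesis
      using that path_nonempty by (intro reachable_edge E_P1_W) auto
  qed
  show ?thesis
  proof (cases a)
    case (Uv i)
    then have "reachable V E (Wv i) (Uv i)"
      using assms by (intro reachable_edge E_W_U) auto
    moreover have "reachable V E (Pv 1) (Wv i)"
      using assms Uv by (intro W) auto
    ultimately show ?thesis
      using Uv reachable_trans by metis
  qed (use assms path W in auto)
qed

lemma constr_connected: "a \<in> V \<Longrightarrow> b \<in> V \<Longrightarrow> reachable V E a b"
  by (rule reachable_trans[OF reachable_sym[OF constr_E_sym reachable_from_P1] reachable_from_P1])

subsection \<open>Upper bound when x_k* = 1\<close>

context
  assumes x_k: "x k = 1"
begin

lemma gdist_U_P1: "s \<in> {1..N} \<Longrightarrow> gdist V E (Uv s) (Pv 1) \<le> 2"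
proof (cases "s = k")
  case True
  have "E (Uv k) (Pv 1)"
    using k x_k by (rule E_U_P1)
  then have "gdist V E (Uv k) (Pv 1) \<le> 1"
    using k path_nonempty by (intro gdist_edge) auto
  with True show ?thesis by simp
next
  case False
  assume s: "s \<in> {1..N}"
  then have "E (Uv s) (Wv s)" "E (Wv s) (Pv 1)"
    using constr_E_sym[OF E_W_U[OF s]] constr_E_sym[OF E_P1_W[of s]] False s by auto
  then have "walk V E [Uv s, Wv s, Pv 1]"
    using s path_nonempty by simp
  then show ?thesis using gdist_le_walk by fastforce
qed

lemma gdist_U_W: "s \<in> {1..N} \<Longrightarrow> i \<in> {1..N} - {k} \<Longrightarrow> gdist V E (Uv s) (Wv i) \<le> 3"
proof -
  assume s: "s \<in> {1..N}" and i: "i \<in> {1..N} - {k}"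
  have "E (Pv 1) (Wv i)"
    using i by (rule E_P1_W)
  then have "gdist V E (Pv 1) (Wv i) \<le> 1"
    using i path_nonempty by (intro gdist_edge) auto
  moreover have "gdist V E (Uv s) (Pv 1) \<le> 2"
    using s by (rule gdist_U_P1)
  moreover have "gdist V E (Uv s) (Wv i) \<le> gdist V E (Uv s) (Pv 1) + gdist V E (Pv 1) (Wv i)"
    using s i path_nonempty by (intro gdist_triangle constr_connected) auto
  ultimately show ?thesis
    by linarith
qed

lemma gdist_W_U: "i \<in> {1..N} \<Longrightarrow> gdist V E (Wv i) (Uv i) \<le> 1"
  by (intro gdist_edge E_W_U) auto

private abbreviation pairs :: "nat list \<Rightarrow> vtx list" where
  "pairs L \<equiv> concat (map (\<lambda>i. [Wv i, Uv i]) L)"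

lemma path_cost_pairs:
  "s \<in> {1..N} \<Longrightarrow> set L \<subseteq> {1..N} - {k} \<Longrightarrow>
    path_cost (gdist V E) (Uv s # pairs L @ [Pv 1]) \<le> 4 * length L + 3"
proof (induction L arbitrary: s)
  case Nil
  then show ?case using gdist_U_P1[OF Nil.prems(1)] by simp
next
  case (Cons i L)
  then have i: "i \<in> {1..N} - {k}" and "set L \<subseteq> {1..N} - {k}"
    by auto
  then have "path_cost (gdist V E) (Uv i # pairs L @ [Pv 1]) \<le> 4 * length L + 3"
    using Cons.IH by simp
  then show ?case
    using gdist_U_W[OF Cons.prems(1) i] gdist_W_U[of i] i by simp
qed

lemma path_cost_head: "path_cost (gdist V E) (map Pv [1..<Suc m] @ [Wv k, Uv k]) \<le> m + 1"
proof -
  let ?xs = "map Pv [1..<Suc m] @ [Wv k, Uv k]"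
  have "path_cost (gdist V E) ?xs \<le> 1 * (length ?xs - 1)"
  proof (rule path_cost_le)
    fix i assume i: "Suc i < length ?xs"
    consider "Suc i < m" | "Suc i = m" | "Suc i = Suc m"
      using i by (fastforce simp del: upt_Suc)
    then show "gdist V E (?xs ! i) (?xs ! Suc i) \<le> 1"
    proof cases
      case 1
      then have "?xs ! i = Pv (Suc i)" "?xs ! Suc i = Pv (Suc (Suc i))"
        by (simp_all add: nth_append del: upt_Suc)
      moreover have "gdist V E (Pv (Suc i)) (Pv (Suc (Suc i))) \<le> 1"
        using 1 by (intro gdist_edge E_path) auto
      ultimately show ?thesis
        by (simp only:)
    next
      case 2
      then have "?xs ! i = Pv m" "?xs ! Suc i = Wv k"
        by (simp_all add: nth_append del: upt_Suc)
      moreover have "gdist V E (Pv m) (Wv k) \<le> 1"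
        using k path_nonempty by (intro gdist_edge E_end_W) auto
      ultimately show ?thesis
        by (simp only:)
    next
      case 3
      then have "?xs ! i = Wv k" "?xs ! Suc i = Uv k"
        by (simp_all add: nth_append del: upt_Suc)
      moreover have "gdist V E (Wv k) (Uv k) \<le> 1"
        using k by (rule gdist_W_U)
      ultimately show ?thesis
        by (simp only:)
    qed
  qed
  then show ?thesis by (simp del: upt_Suc)
qed

lemma graphic_tsp_upper: "graphic_tsp V E \<le> n + 2 * N"
proof -
  define L where "L = filter (\<lambda>i. i \<noteq> k) [1..<Suc N]"
  define vs where "vs = map Pv [1..<Suc m] @ Wv k # Uv k # pairs L"
  have set_L: "set L = {1..N} - {k}" and "distinct L"
    unfolding L_def by auto
  then have length_L: "length L = N - 1"
    using k by (metis distinct_card card_Diff_singleton card_atLeastAtMost diff_Suc_1)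
  have "distinct (pairs L)"
    using \<open>distinct L\<close> by (induction L) auto
  then have "distinct vs"
    using set_L unfolding vs_def by (auto simp: distinct_map inj_on_def)
  have "set vs = V"
    using set_L k path_nonempty unfolding vs_def by (auto simp: constr_V_def)
  have hd_vs: "hd vs = Pv 1"
    using path_nonempty unfolding vs_def by (simp add: upt_rec)
  have tour_split: "vs @ [hd vs] = (map Pv [1..<Suc m] @ [Wv k]) @ Uv k # (pairs L @ [Pv 1])"
    unfolding hd_vs unfolding vs_def by simp
  have "tour_cost V E vs = path_cost (gdist V E) (vs @ [hd vs])"
    unfolding vs_def by (rule tour_cost_conv_path_cost) simp
  also have "\<dots> = path_cost (gdist V E) (map Pv [1..<Suc m] @ [Wv k, Uv k])
        + path_cost (gdist V E) (Uv k # pairs L @ [Pv 1])"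
    unfolding tour_split path_cost_append[of _ _ "Uv k" "pairs L @ [Pv 1]"]
    by (simp only: append_assoc append_Cons append_Nil)
  also have "\<dots> \<le> (m + 1) + (4 * length L + 3)"
    using path_cost_head path_cost_pairs[of k L] k set_L by (intro add_mono) auto
  also have "\<dots> = n + 2 * N"
    using length_L k path_nonempty by auto
  finally show ?thesis
    using graphic_tsp_le_tour_cost[OF finite_constr_V \<open>distinct vs\<close> \<open>set vs = V\<close>, of E]
    by linarith
qed

end

subsection \<open>Lower bound when x_k* = 0\<close>

context
  assumes x_k: "x k = 0"
begin

private abbreviation "h \<equiv> cut_potential m N k"

text \<open>The only edge that would cross all prefix cuts, v_1 u_k*, is absent because x_k* = 0.\<close>

lemma cut_potential_constr_E0:
  assumes "constr_E0 N n x k a b"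
  shows "h a b \<le> 2"
proof -
  have swap: "(if i \<noteq> j then u else v) = (if i = j then v else u)" for i j :: nat and u v :: nat
    by simp
  from assms show ?thesis
    unfolding constr_E0_def
  proof (elim disjE exE conjE)
    fix i assume "1 \<le> i" "i < m" "a = Pv i" "b = Pv (Suc i)"
    then show ?thesis
      using prefix_cuts_crossed_by_path_edge[of i m k]
      by (simp add: cut_potential_def crossing_def path_position_def)
  next
    fix i assume "x i = 1" "a = Pv 1" "b = Uv i"
    then have "i \<noteq> k" using x_k by auto
    then show ?thesis
      using \<open>a = Pv 1\<close> \<open>b = Uv i\<close>
      by (auto simp: cut_potential_def crossing_def path_position_def swap)
  qed (auto simp: cut_potential_def crossing_def path_position_def swap)
qed

lemma cut_potential_edge: "E a b \<Longrightarrow> h a b \<le> 2"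
  unfolding constr_E_def using cut_potential_constr_E0 cut_potential_sym by metis

lemma tour_cost_lower:
  assumes vs: "set vs = V"
  shows "2 * n - N - 1 \<le> tour_cost V E vs"
proof -
  let ?I = "{1..N} - {k}"
  let ?crossings = "\<lambda>C. \<Sum>i<length vs. crossing C (vs ! i) (vs ! (Suc i mod length vs))"
  let ?family = "\<lambda>J C. \<Sum>i<length vs. \<Sum>j\<in>J. crossing (C j) (vs ! i) (vs ! (Suc i mod length vs))"
  have P1: "Pv 1 \<in> set vs" and Pm: "Pv m \<in> set vs" and Uk: "Uv k \<in> set vs"
    using path_nonempty k vs by auto
  have "(\<Sum>i<length vs. h (vs ! i) (vs ! (Suc i mod length vs))) \<le> 2 * tour_cost V E vs"
    by (rule tour_potential_le[OF cut_potential_triangle cut_potential_refl cut_potential_edge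
          constr_connected]) (simp_all add: vs)
  moreover have "(\<Sum>i<length vs. h (vs ! i) (vs ! (Suc i mod length vs))) =
      2 * ?family {1..<m} (\<lambda>j. {v. path_position m k v \<le> j})
    + 2 * ?crossings {Uv k, Wv k} + 2 * ?crossings {Uv k}
    + ?family ?I (\<lambda>j. {Uv j}) + ?family ?I (\<lambda>j. {Wv j}) + ?family ?I (\<lambda>j. {Uv j, Wv j})"
    by (simp add: cut_potential_def sum.distrib sum_distrib_left)
  moreover have "2 * card {1..<m} \<le> ?family {1..<m} (\<lambda>j. {v. path_position m k v \<le> j})"
  proof (rule tour_crossing_family_ge)
    fix j assume "j \<in> {1..<m}"
    then show "\<exists>a\<in>set vs. \<exists>b\<in>set vs. a \<in> {v. path_position m k v \<le> j} \<and> b \<notin> {v. path_position m k v \<le> j}"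
      using P1 Pm by (intro bexI[of _ "Pv 1"] bexI[of _ "Pv m"]) (auto simp: path_position_def)
  qed
  moreover have "2 \<le> ?crossings {Uv k, Wv k}" "2 \<le> ?crossings {Uv k}"
    using Uk P1 by (auto intro: tour_crossing_ge_2)
  moreover have "2 * card ?I \<le> ?family ?I (\<lambda>j. {Uv j})"
    "2 * card ?I \<le> ?family ?I (\<lambda>j. {Wv j})"
    "2 * card ?I \<le> ?family ?I (\<lambda>j. {Uv j, Wv j})"
    by (intro tour_crossing_family_ge; use P1 vs in force)+
  moreover have "card ?I = N - 1"
    using k by (simp add: card_Diff_singleton)
  moreover have "card {1..<m} = m - 1"
    by simp
  ultimately have "2 * (m - 1) + 4 + 3 * (N - 1) \<le> tour_cost V E vs"
    by linarith
  then show ?thesis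
    using k path_nonempty by linarith
qed

end

end

theorem mainTheorem20:
  fixes N n k :: nat and x :: "nat \<Rightarrow> nat"
  assumes "N \<ge> 1" and "n \<ge> 2 * N + 2"
    and "\<forall>i\<in>{1..N}. x i \<in> {0, 1}"
    and "k \<in> {1..N}"
  shows "(x k = 1 \<longrightarrow> graphic_tsp (constr_V N n) (constr_E N n x k) \<le> n + 2 * N)
       \<and> (x k = 0 \<longrightarrow> graphic_tsp (constr_V N n) (constr_E N n x k) \<ge> 2 * n - N - 1)"
proof (intro conjI impI)
  have "2 * N < n" using assms(2) by simp
  then show "x k = 1 \<Longrightarrow> graphic_tsp (constr_V N n) (constr_E N n x k) \<le> n + 2 * N"
    using graphic_tsp_upper assms(4) by blast
  show "x k = 0 \<Longrightarrow> graphic_tsp (constr_V N n) (constr_E N n x k) \<ge> 2 * n - N - 1"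
    using tour_cost_lower[OF assms(4) \<open>2 * N < n\<close>] by (intro graphic_tsp_ge finite_constr_V)
qed

end
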